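(* Let $\gamma>0$, let $\mathcal{S}\subset\mathbb{T}$ be a measurable set of positive Lebesgue measure, and let $B_1,B_2\subset\mathbb{N}$ be finite sets such that $\gamma$ is a lower Riesz bound in $L^2(\mathcal{S})$ for both $E(B_1)$ and $E(B_2)$. Then for every $0<\gamma'<\gamma$ there exists $M\in\mathbb{Z}$ such that $\gamma'$ is a lower Riesz bound in $L^2(\mathcal{S})$ for $E(B_1\cup(M+B_2))$.
   Context: $\mathbb{T}=\mathbb{R}/2\pi\mathbb{Z}$. For $B\subset\mathbb{Z}$, $E(B):=\{e^{i\lambda t}\}_{\lambda\in B}$, and $M+B:=\{M+b:b\in B\}$. A positive number $\gamma$ is a lower Riesz bound in $L^2(\mathcal{S})$ for $E(B)$ if $\int_{\mathcal{S}}\big|\sum_{\lambda\in B}c(\lambda)e^{i\lambda t}\big|^2\frac{dt}{2\pi}\ge\gamma\sum_{\lambda\in B}|c(\lambda)|^2$ for every finite sequence of scalars $\{c(\lambda)\}_{\lambda\in B}$. *)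

theory Defs
  imports "HOL-Analysis.Analysis"
begin

text \<open>The circle T = R/2piZ is represented by the fundamental domain [0, 2pi);
  subsets of T are subsets of this interval, with Lebesgue measure.\<close>

definition lower_riesz_bound :: "real set \<Rightarrow> int set \<Rightarrow> real \<Rightarrow> bool" where
  "lower_riesz_bound S B \<gamma> \<longleftrightarrow> \<gamma> > 0 \<and>
     (\<forall>c :: int \<Rightarrow> complex.
        (LINT t:S|lebesgue. (cmod (\<Sum>l\<in>B. c l * exp (\<i> * of_int l * of_real t)))\<^sup>2) / (2 * pi)
          \<ge> \<gamma> * (\<Sum>l\<in>B. (cmod (c l))\<^sup>2))"

end

theory Submission
  imports Defs
begin

(* For a finite set B of frequencies, the quadratic form
     c |-> integral over S of |sum_l c(l) e^{ilt}|^2 = sum_{l,m in B} c(l) conj(c(m)) F(l - m),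
   where F(k) is the integral of e^{ikt} over S, is bounded below by 2 pi gamma |c|^2 exactly when
   gamma is a lower Riesz bound. For the union of B1 and a translate M + B2 the form splits into
   the two diagonal blocks, bounded below by hypothesis, and an off-diagonal block whose entries
   involve F(l - m) with l in B1 and m in M + B2 only. By Bessel's inequality F(k) exceeds any
   epsilon > 0 for finitely many k only (Riemann-Lebesgue), so for M large every off-diagonal entry
   is at most epsilon, and by AM-GM the off-diagonal block costs at most
   epsilon (|B1| + |B2|) |c|^2, which is below 2 pi (gamma - gamma') |c|^2 for small epsilon. *)

definition fourier_exp :: "int \<Rightarrow> real \<Rightarrow> complex" where
  "fourier_exp k t = exp (\<i> * of_int k * of_real t)"

definition trig_poly :: "int set \<Rightarrow> (int \<Rightarrow> complex) \<Rightarrow> real \<Rightarrow> complex" where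
  "trig_poly A c t = (\<Sum>l\<in>A. c l * fourier_exp l t)"

definition set_fourier :: "real set \<Rightarrow> int \<Rightarrow> complex" where
  "set_fourier S k = (LINT t:S|lebesgue. fourier_exp k t)"

definition gram_form ::
    "real set \<Rightarrow> int set \<Rightarrow> int set \<Rightarrow> (int \<Rightarrow> complex) \<Rightarrow> (int \<Rightarrow> complex) \<Rightarrow> complex" where
  "gram_form S A B c d = (\<Sum>l\<in>A. \<Sum>m\<in>B. c l * cnj (d m) * set_fourier S (l - m))"

lemma norm_fourier_exp [simp]: "norm (fourier_exp k t) = 1"
  by (simp add: fourier_exp_def norm_exp_i_times[of "of_int k * t", simplified] mult.assoc)

lemma fourier_exp_mult_cnj: "fourier_exp l t * cnj (fourier_exp m t) = fourier_exp (l - m) t"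
  unfolding fourier_exp_def exp_cnj by (simp add: exp_add[symmetric] algebra_simps)

lemma fourier_exp_add: "fourier_exp (l + m) t = fourier_exp l t * fourier_exp m t"
  unfolding fourier_exp_def by (simp add: exp_add[symmetric] algebra_simps)

lemma continuous_on_fourier_exp [continuous_intros]: "continuous_on A (fourier_exp k)"
  unfolding fourier_exp_def by (intro continuous_intros)

lemma continuous_on_trig_poly [continuous_intros]: "continuous_on A (trig_poly B c)"
  unfolding trig_poly_def by (intro continuous_intros)

lemma norm_trig_poly_le: "norm (trig_poly A c t) \<le> (\<Sum>l\<in>A. norm (c l))"
  unfolding trig_poly_def by (rule order.trans[OF norm_sum]) (simp add: norm_mult)

lemma set_integrable_bounded_continuous:
  fixes f :: "real \<Rightarrow> 'b::{banach, second_countable_topology}"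
  assumes "S \<in> lmeasurable" "continuous_on UNIV f" "\<And>t. norm (f t) \<le> C"
  shows "set_integrable lebesgue S f"
proof (rule set_integrable_bound)
  show "set_integrable lebesgue S (\<lambda>_. C)"
    using assms(1) by (rule absolutely_integrable_on_const)
  show "set_borel_measurable lebesgue S f"
    using assms(1) borel_measurable_continuous_onI[OF assms(2)]
    unfolding set_borel_measurable_def
    by (intro borel_measurable_scaleR borel_measurable_indicator measurable_completion) auto
  show "AE t in lebesgue. t \<in> S \<longrightarrow> norm (f t) \<le> norm C"
    using assms(3) order_trans[OF assms(3) abs_ge_self] by auto
qed

lemma lmeasurable_subset_Icc: "S \<in> sets lebesgue \<Longrightarrow> S \<subseteq> {a..b :: real} \<Longrightarrow> S \<in> lmeasurable"
  by (intro bounded_set_imp_lmeasurable bounded_subset[OF bounded_closed_interval])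

lemma set_integrable_fourier_exp: "S \<in> lmeasurable \<Longrightarrow> set_integrable lebesgue S (fourier_exp k)"
  by (rule set_integrable_bounded_continuous[where C=1]) (auto intro: continuous_intros)

lemma set_integrable_trig_poly: "S \<in> lmeasurable \<Longrightarrow> set_integrable lebesgue S (trig_poly A c)"
  by (rule set_integrable_bounded_continuous[OF _ _ norm_trig_poly_le]) (auto intro: continuous_intros)

lemma set_integrable_norm_trig_poly_sq:
  "S \<in> lmeasurable \<Longrightarrow> set_integrable lebesgue S (\<lambda>t. (norm (trig_poly A c t))\<^sup>2)"
  by (rule set_integrable_bounded_continuous[where C="(\<Sum>l\<in>A. norm (c l))\<^sup>2"])
     (auto intro!: continuous_intros power_mono norm_trig_poly_le)

lemma set_integral_sum_fourier_exp:
  assumes "S \<in> lmeasurable" "finite I"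
  shows "(LINT t:S|lebesgue. \<Sum>i\<in>I. a i * fourier_exp (k i) t) = (\<Sum>i\<in>I. a i * set_fourier S (k i))"
proof -
  have "set_integrable lebesgue S (\<lambda>t. a i * fourier_exp (k i) t)" for i
    using set_integrable_fourier_exp[OF assms(1)] by (rule set_integrable_mult_right)
  then have "(LINT t:S|lebesgue. \<Sum>i\<in>I. a i * fourier_exp (k i) t)
      = (\<Sum>i\<in>I. LINT t:S|lebesgue. a i * fourier_exp (k i) t)"
    unfolding set_lebesgue_integral_def set_integrable_def scaleR_sum_right
    by (intro Bochner_Integration.integral_sum)
  then show ?thesis by (simp add: set_fourier_def)
qed

lemma set_integral_trig_poly_mult_cnj:
  assumes "S \<in> lmeasurable" "finite A" "finite B"
  shows "(LINT t:S|lebesgue. trig_poly A c t * cnj (trig_poly B d t)) = gram_form S A B c d"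
proof -
  have "trig_poly A c t * cnj (trig_poly B d t)
      = (\<Sum>(l, m)\<in>A \<times> B. c l * cnj (d m) * fourier_exp (l - m) t)" for t
    unfolding trig_poly_def cnj_sum sum_product sum.cartesian_product
    by (intro sum.cong refl) (auto simp: fourier_exp_mult_cnj[symmetric] ac_simps)
  then show ?thesis
    using set_integral_sum_fourier_exp[OF assms(1) finite_cartesian_product[OF assms(2,3)],
        of "\<lambda>(l, m). c l * cnj (d m)" "\<lambda>(l, m). l - m"]
    by (simp add: gram_form_def sum.cartesian_product split_def)
qed

lemma set_integral_norm_trig_poly_sq:
  assumes "S \<in> lmeasurable" "finite A"
  shows "(LINT t:S|lebesgue. (norm (trig_poly A c t))\<^sup>2) = Re (gram_form S A A c c)"
proof -
  have "complex_of_real (LINT t:S|lebesgue. (norm (trig_poly A c t))\<^sup>2)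
      = (LINT t:S|lebesgue. trig_poly A c t * cnj (trig_poly A c t))"
    by (simp add: set_integral_complex_of_real[symmetric] complex_norm_square del: of_real_power)
  then show ?thesis
    using set_integral_trig_poly_mult_cnj[OF assms assms(2)] by (metis Re_complex_of_real)
qed

lemma set_fourier_uminus: "set_fourier S (- k) = cnj (set_fourier S k)"
proof -
  have "cnj (fourier_exp k t) = fourier_exp (- k) t" for t
    unfolding fourier_exp_def exp_cnj by simp
  then show ?thesis
    unfolding set_fourier_def set_lebesgue_integral_def
    by (simp flip: Bochner_Integration.integral_cnj add: scaleR_conv_of_real)
qed

lemma gram_form_swap: "gram_form S B A d c = cnj (gram_form S A B c d)"
  unfolding gram_form_def cnj_sum
  by (subst sum.swap) (simp add: set_fourier_uminus[symmetric] mult_ac)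

lemma set_fourier_period: "set_fourier {0..2*pi} k = (if k = 0 then 2 * pi else 0)"
proof -
  have "set_integrable lebesgue {0..2*pi} (fourier_exp k)"
    by (intro set_integrable_fourier_exp) simp
  then have eq: "set_fourier {0..2*pi} k = integral {0..2*pi} (fourier_exp k)"
    unfolding set_fourier_def by (rule set_lebesgue_integral_eq_integral)
  show ?thesis
  proof (cases "k = 0")
    case True
    then have "fourier_exp k = (\<lambda>_. 1)"
      by (simp add: fourier_exp_def fun_eq_iff)
    then show ?thesis unfolding eq using True by (simp add: scaleR_conv_of_real)
  next
    case False
    define F where "F z = exp (\<i> * of_int k * z) / (\<i> * of_int k)" for z :: complex
    have "((\<lambda>x. F (of_real x)) has_vector_derivative fourier_exp k x) (at x within {0..2*pi})" for x
    proof -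
      have "(F has_field_derivative exp (\<i> * of_int k * of_real x)) (at (of_real x))"
        unfolding F_def using False by (auto intro!: derivative_eq_intros simp: field_simps)
      then show ?thesis unfolding fourier_exp_def by (rule has_vector_derivative_real_field)
    qed
    then have "(fourier_exp k has_integral (F (of_real (2*pi)) - F (of_real 0))) {0..2*pi}"
      by (intro fundamental_theorem_of_calculus) auto
    moreover have "exp (\<i> * of_int k * of_real (2*pi)) = 1"
      using exp_integer_2pi[of "of_int k"] by (simp add: ac_simps)
    ultimately show ?thesis
      unfolding eq using False by (simp add: F_def integral_unique)
  qed
qed

lemma set_integral_norm_trig_poly_sq_period:
  assumes "finite A"
  shows "(LINT t:{0..2*pi}|lebesgue. (norm (trig_poly A c t))\<^sup>2)
    = 2 * pi * (\<Sum>l\<in>A. (norm (c l))\<^sup>2)"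
proof -
  have "c l * cnj (c m) * set_fourier {0..2*pi} (l - m) = (if m = l then c l * cnj (c l) * (2 * pi) else 0)"
    for l m by (simp add: set_fourier_period)
  then have "gram_form {0..2*pi} A A c c = (\<Sum>l\<in>A. c l * cnj (c l) * (2 * pi))"
    unfolding gram_form_def using assms by (simp add: sum.delta)
  also have "\<dots> = of_real (2 * pi * (\<Sum>l\<in>A. (norm (c l))\<^sup>2))"
    by (simp add: complex_norm_square sum_distrib_left mult_ac del: of_real_power)
  finally show ?thesis
    using assms by (simp add: set_integral_norm_trig_poly_sq)
qed

lemma set_integral_norm_trig_poly_sq_le:
  assumes "S \<in> sets lebesgue" "S \<subseteq> {0..2*pi}" "finite A"
  shows "(LINT t:S|lebesgue. (norm (trig_poly A c t))\<^sup>2) \<le> 2 * pi * (\<Sum>l\<in>A. (norm (c l))\<^sup>2)"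
proof -
  have lmeasurable: "S \<in> lmeasurable" "{0..2*pi} \<in> lmeasurable"
    using assms(1,2) by (auto intro: lmeasurable_subset_Icc)
  have "(LINT t:S|lebesgue. (norm (trig_poly A c t))\<^sup>2)
      \<le> (LINT t:{0..2*pi}|lebesgue. (norm (trig_poly A c t))\<^sup>2)"
    using set_integrable_norm_trig_poly_sq[OF lmeasurable(1)]
      set_integrable_norm_trig_poly_sq[OF lmeasurable(2)] assms(2)
    unfolding set_lebesgue_integral_def set_integrable_def
    by (intro integral_mono) (auto simp: indicator_def)
  then show ?thesis
    using set_integral_norm_trig_poly_sq_period[OF assms(3)] by simp
qed

lemma set_integral_Re:
  "set_integrable M S f \<Longrightarrow> (LINT t:S|M. Re (f t)) = Re (LINT t:S|M. f t)"
  unfolding set_lebesgue_integral_def set_integrable_def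
  by (subst integral_Re[symmetric]) simp_all

(* Bessel's inequality for the indicator of S; it is proved by expanding the integral over S of
   |1 - q|^2 >= 0, where q has coefficients conj (set_fourier S k) / (2 pi). *)
lemma sum_norm_set_fourier_sq_le:
  assumes S: "S \<in> sets lebesgue" "S \<subseteq> {0..2*pi}" and "finite F"
  shows "(\<Sum>k\<in>F. (norm (set_fourier S k))\<^sup>2) \<le> 2 * pi * measure lebesgue S"
proof -
  define X where "X = (\<Sum>k\<in>F. (norm (set_fourier S k))\<^sup>2)"
  define d where "d k = cnj (set_fourier S k) / (2 * pi)" for k
  define q where "q = trig_poly F d"
  have lmeasurable: "S \<in> lmeasurable"
    using S by (rule lmeasurable_subset_Icc)
  have integrable_q: "set_integrable lebesgue S q"
    unfolding q_def using lmeasurable by (rule set_integrable_trig_poly)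
  have "(LINT t:S|lebesgue. q t) = (\<Sum>k\<in>F. d k * set_fourier S k)"
    unfolding q_def trig_poly_def using set_integral_sum_fourier_exp[OF lmeasurable \<open>finite F\<close>, of d id]
    by simp
  also have "\<dots> = of_real (X / (2 * pi))"
    unfolding X_def d_def by (simp add: sum_divide_distrib complex_norm_square mult.commute del: of_real_power)
  finally have integral_q: "(LINT t:S|lebesgue. Re (q t)) = X / (2 * pi)"
    by (simp add: set_integral_Re[OF integrable_q])
  have "(LINT t:S|lebesgue. (norm (q t))\<^sup>2) \<le> 2 * pi * (\<Sum>k\<in>F. (norm (d k))\<^sup>2)"
    unfolding q_def using S \<open>finite F\<close> by (rule set_integral_norm_trig_poly_sq_le)
  also have "\<dots> = X / (2 * pi)"
    unfolding X_def d_def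
    by (simp add: norm_divide power_divide sum_divide_distrib[symmetric] power2_eq_square)
  finally have integral_norm_q: "(LINT t:S|lebesgue. (norm (q t))\<^sup>2) \<le> X / (2 * pi)" .
  have "(norm (1 - q t))\<^sup>2 = 1 - 2 * Re (q t) + (norm (q t))\<^sup>2" for t
    by (simp add: cmod_power2 power2_diff)
  moreover have "set_integrable lebesgue S (\<lambda>t. Re (q t))"
    using integrable_q unfolding set_integrable_def by (auto dest: integrable_Re)
  moreover have "set_integrable lebesgue S (\<lambda>t. (norm (q t))\<^sup>2)"
    unfolding q_def using lmeasurable by (rule set_integrable_norm_trig_poly_sq)
  ultimately have "(LINT t:S|lebesgue. (norm (1 - q t))\<^sup>2)
      = measure lebesgue S - 2 * (LINT t:S|lebesgue. Re (q t)) + (LINT t:S|lebesgue. (norm (q t))\<^sup>2)"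
    using lmeasurable by (simp add: lmeasure_integral set_lebesgue_integral_eq_integral(2))
  moreover have "0 \<le> (LINT t:S|lebesgue. (norm (1 - q t))\<^sup>2)"
    unfolding set_lebesgue_integral_def by (intro Bochner_Integration.integral_nonneg) simp
  ultimately have "0 \<le> measure lebesgue S - X / (2 * pi)"
    using integral_q integral_norm_q by linarith
  then show ?thesis
    unfolding X_def by (simp add: field_simps)
qed

lemma finite_set_fourier_gt:
  assumes S: "S \<in> sets lebesgue" "S \<subseteq> {0..2*pi}" and "\<epsilon> > 0"
  shows "finite {k. \<epsilon> < norm (set_fourier S k)}"
proof -
  let ?C = "nat \<lceil>2 * pi * measure lebesgue S / \<epsilon>\<^sup>2\<rceil>"
  have "card F \<le> ?C" if F: "F \<subseteq> {k. \<epsilon> < norm (set_fourier S k)}" "finite F" for F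
  proof -
    have "real (card F) * \<epsilon>\<^sup>2 = (\<Sum>k\<in>F. \<epsilon>\<^sup>2)" by simp
    also have "\<dots> \<le> (\<Sum>k\<in>F. (norm (set_fourier S k))\<^sup>2)"
      using F \<open>\<epsilon> > 0\<close> by (intro sum_mono power_mono) auto
    also have "\<dots> \<le> 2 * pi * measure lebesgue S"
      using S F(2) by (rule sum_norm_set_fourier_sq_le)
    finally have "real (card F) \<le> 2 * pi * measure lebesgue S / \<epsilon>\<^sup>2"
      using \<open>\<epsilon> > 0\<close> by (simp add: field_simps)
    then show ?thesis by linarith
  qed
  then show ?thesis using finite_if_finite_subsets_card_bdd by blast
qed

lemma gram_form_Un_left:
  "finite A1 \<Longrightarrow> finite A2 \<Longrightarrow> A1 \<inter> A2 = {} \<Longrightarrow>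
    gram_form S (A1 \<union> A2) B c d = gram_form S A1 B c d + gram_form S A2 B c d"
  unfolding gram_form_def by (rule sum.union_disjoint)

lemma gram_form_Un_right:
  "finite B1 \<Longrightarrow> finite B2 \<Longrightarrow> B1 \<inter> B2 = {} \<Longrightarrow>
    gram_form S A (B1 \<union> B2) c d = gram_form S A B1 c d + gram_form S A B2 c d"
  unfolding gram_form_def by (simp add: sum.union_disjoint sum.distrib)

lemma norm_gram_form_le:
  assumes "\<And>l m. l \<in> A \<Longrightarrow> m \<in> B \<Longrightarrow> norm (set_fourier S (l - m)) \<le> \<epsilon>"
  shows "2 * norm (gram_form S A B c c)
    \<le> \<epsilon> * (card B * (\<Sum>l\<in>A. (norm (c l))\<^sup>2) + card A * (\<Sum>m\<in>B. (norm (c m))\<^sup>2))"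
proof -
  have term_le: "2 * norm (c l * cnj (c m) * set_fourier S (l - m))
      \<le> \<epsilon> * ((norm (c l))\<^sup>2 + (norm (c m))\<^sup>2)"
    if "l \<in> A" "m \<in> B" for l m
  proof -
    have "2 * norm (c l * cnj (c m) * set_fourier S (l - m))
        = (2 * (norm (c l) * norm (c m))) * norm (set_fourier S (l - m))"
      by (simp add: norm_mult)
    also have "\<dots> \<le> ((norm (c l))\<^sup>2 + (norm (c m))\<^sup>2) * \<epsilon>"
      using sum_squares_bound[of "norm (c l)" "norm (c m)"] assms[OF that]
      by (intro mult_mono) (auto simp: power2_eq_square)
    finally show ?thesis by (simp add: mult.commute)
  qed
  have "norm (gram_form S A B c c)
      \<le> (\<Sum>l\<in>A. \<Sum>m\<in>B. norm (c l * cnj (c m) * set_fourier S (l - m)))"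
    unfolding gram_form_def by (rule order.trans[OF norm_sum sum_mono[OF norm_sum]])
  then have "2 * norm (gram_form S A B c c)
      \<le> (\<Sum>l\<in>A. \<Sum>m\<in>B. 2 * norm (c l * cnj (c m) * set_fourier S (l - m)))"
    unfolding sum_distrib_left[symmetric] by simp
  also have "\<dots> \<le> (\<Sum>l\<in>A. \<Sum>m\<in>B. \<epsilon> * ((norm (c l))\<^sup>2 + (norm (c m))\<^sup>2))"
    by (intro sum_mono term_le)
  also have "\<dots>
      = \<epsilon> * (card B * (\<Sum>l\<in>A. (norm (c l))\<^sup>2) + card A * (\<Sum>m\<in>B. (norm (c m))\<^sup>2))"
    by (simp add: sum.distrib sum_distrib_left ring_distribs mult_ac flip: sum.swap[of _ A B])
  finally show ?thesis .
qed

lemma lower_riesz_bound_iff_gram_form: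
  assumes "S \<in> lmeasurable" "finite B"
  shows "lower_riesz_bound S B \<gamma> \<longleftrightarrow>
    \<gamma> > 0 \<and> (\<forall>c. 2 * pi * \<gamma> * (\<Sum>l\<in>B. (norm (c l))\<^sup>2) \<le> Re (gram_form S B B c c))"
  unfolding lower_riesz_bound_def fourier_exp_def[symmetric] trig_poly_def[symmetric]
    set_integral_norm_trig_poly_sq[OF assms]
  by (simp add: field_simps)

lemma lower_riesz_bound_translate:
  assumes "lower_riesz_bound S B \<gamma>"
  shows "lower_riesz_bound S ((+) M ` B) \<gamma>"
  unfolding lower_riesz_bound_def fourier_exp_def[symmetric] trig_poly_def[symmetric]
proof (intro conjI allI)
  show "\<gamma> > 0" using assms by (simp add: lower_riesz_bound_def)
  fix c :: "int \<Rightarrow> complex"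
  let ?c = "\<lambda>l. c (M + l)"
  have inj: "inj_on ((+) M) B" by simp
  have "trig_poly ((+) M ` B) c t = fourier_exp M t * trig_poly B ?c t" for t
    unfolding trig_poly_def sum.reindex[OF inj] sum_distrib_left
    by (simp add: fourier_exp_add mult_ac)
  then have "norm (trig_poly ((+) M ` B) c t) = norm (trig_poly B ?c t)" for t
    by (simp add: norm_mult)
  moreover have "\<gamma> * (\<Sum>l\<in>B. (norm (?c l))\<^sup>2)
      \<le> (LINT t:S|lebesgue. (norm (trig_poly B ?c t))\<^sup>2) / (2 * pi)"
    using assms unfolding lower_riesz_bound_def fourier_exp_def[symmetric] trig_poly_def[symmetric]
    by (auto dest: spec[of _ ?c])
  ultimately show "\<gamma> * (\<Sum>l\<in>(+) M ` B. (norm (c l))\<^sup>2)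
      \<le> (LINT t:S|lebesgue. (norm (trig_poly ((+) M ` B) c t))\<^sup>2) / (2 * pi)"
    by (simp add: sum.reindex[OF inj])
qed

lemma lower_riesz_bound_Un:
  assumes S: "S \<in> lmeasurable" and A: "finite A1" "finite A2" "A1 \<inter> A2 = {}"
    and riesz: "lower_riesz_bound S A1 \<gamma>" "lower_riesz_bound S A2 \<gamma>"
    and small: "\<And>l m. l \<in> A1 \<Longrightarrow> m \<in> A2 \<Longrightarrow> norm (set_fourier S (l - m)) \<le> \<epsilon>"
    and \<epsilon>: "0 \<le> \<epsilon>" "\<epsilon> * (card A1 + card A2) \<le> 2 * pi * (\<gamma> - \<gamma>')"
    and "\<gamma>' > 0"
  shows "lower_riesz_bound S (A1 \<union> A2) \<gamma>'"
  unfolding lower_riesz_bound_iff_gram_form[OF S finite_UnI[OF A(1,2)]]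
proof (intro conjI allI)
  fix c :: "int \<Rightarrow> complex"
  define s1 where "s1 = (\<Sum>l\<in>A1. (norm (c l))\<^sup>2)"
  define s2 where "s2 = (\<Sum>l\<in>A2. (norm (c l))\<^sup>2)"
  define G where "G = gram_form S A1 A2 c c"
  have "gram_form S (A1 \<union> A2) (A1 \<union> A2) c c
      = gram_form S A1 A1 c c + gram_form S A2 A2 c c + (G + cnj G)"
    unfolding G_def gram_form_swap[symmetric] gram_form_Un_left[OF A] gram_form_Un_right[OF A]
    by simp
  moreover have "2 * pi * \<gamma> * s1 \<le> Re (gram_form S A1 A1 c c)"
    using riesz(1) unfolding s1_def lower_riesz_bound_iff_gram_form[OF S A(1)] by blast
  moreover have "2 * pi * \<gamma> * s2 \<le> Re (gram_form S A2 A2 c c)"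
    using riesz(2) unfolding s2_def lower_riesz_bound_iff_gram_form[OF S A(2)] by blast
  moreover have "- 2 * norm G \<le> Re (G + cnj G)"
    using abs_Re_le_cmod[of G] by simp
  ultimately have "Re (gram_form S (A1 \<union> A2) (A1 \<union> A2) c c)
      \<ge> 2 * pi * \<gamma> * s1 + 2 * pi * \<gamma> * s2 - 2 * norm G"
    by simp
  moreover have "2 * norm G \<le> \<epsilon> * (card A2 * s1 + card A1 * s2)"
    unfolding G_def s1_def s2_def by (rule norm_gram_form_le[OF small])
  moreover have "s1 \<ge> 0" "s2 \<ge> 0"
    unfolding s1_def s2_def by (auto intro: sum_nonneg)
  then have "card A2 * s1 + card A1 * s2 \<le> (card A1 + card A2) * (s1 + s2)"
    by (simp add: algebra_simps)
  then have "\<epsilon> * (card A2 * s1 + card A1 * s2) \<le> \<epsilon> * (card A1 + card A2) * (s1 + s2)"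
    using \<epsilon>(1) by (simp add: mult_left_mono mult.assoc)
  moreover have "\<epsilon> * (card A1 + card A2) * (s1 + s2) \<le> 2 * pi * (\<gamma> - \<gamma>') * (s1 + s2)"
    using \<epsilon>(2) \<open>s1 \<ge> 0\<close> \<open>s2 \<ge> 0\<close> by (intro mult_right_mono) auto
  moreover have "(\<Sum>l\<in>A1 \<union> A2. (norm (c l))\<^sup>2) = s1 + s2"
    unfolding s1_def s2_def using A by (rule sum.union_disjoint)
  ultimately show "2 * pi * \<gamma>' * (\<Sum>l\<in>A1 \<union> A2. (norm (c l))\<^sup>2)
      \<le> Re (gram_form S (A1 \<union> A2) (A1 \<union> A2) c c)"
    by (simp add: algebra_simps)
qed (fact \<open>\<gamma>' > 0\<close>)

lemma obtain_shift_avoiding: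
  fixes A B K :: "int set"
  assumes "finite A" "finite B" "finite K"
  obtains M where "\<And>l m. l \<in> A \<Longrightarrow> m \<in> B \<Longrightarrow> l - (M + m) \<notin> K"
proof -
  obtain a b k where bounds: "abs ` A \<subseteq> {..<a}" "abs ` B \<subseteq> {..<b}" "abs ` K \<subseteq> {..<k}"
    using assms unfolding finite_int_iff_bounded by meson
  have "l - (\<bar>a\<bar> + \<bar>b\<bar> + \<bar>k\<bar> + m) \<notin> K" if "l \<in> A" "m \<in> B" for l m
  proof
    assume "l - (\<bar>a\<bar> + \<bar>b\<bar> + \<bar>k\<bar> + m) \<in> K"
    with bounds that have "\<bar>l - (\<bar>a\<bar> + \<bar>b\<bar> + \<bar>k\<bar> + m)\<bar> < k" "\<bar>l\<bar> < a" "\<bar>m\<bar> < b"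
      by auto
    then show False by linarith
  qed
  then show ?thesis by (rule that)
qed

theorem lemma8:
  fixes \<gamma> \<gamma>' :: real and S :: "real set" and B1 B2 :: "nat set"
  assumes "\<gamma> > 0"
    and "S \<subseteq> {0..<2*pi}" and "S \<in> sets lebesgue" and "emeasure lebesgue S > 0"
    and "finite B1" and "finite B2"
    and "lower_riesz_bound S (int ` B1) \<gamma>"
    and "lower_riesz_bound S (int ` B2) \<gamma>"
    and "0 < \<gamma>'" and "\<gamma>' < \<gamma>"
  shows "\<exists>M :: int. lower_riesz_bound S (int ` B1 \<union> (\<lambda>b. M + int b) ` B2) \<gamma>'"
proof -
  have Ssub: "S \<subseteq> {0..2*pi}"
    using assms(2) by auto
  have S: "S \<in> lmeasurable"
    using assms(3) Ssub by (rule lmeasurable_subset_Icc)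
  define \<epsilon> where "\<epsilon> = 2 * pi * (\<gamma> - \<gamma>') / (card B1 + card B2 + 1)"
  have "\<epsilon> > 0" using assms(10) by (simp add: \<epsilon>_def)
  then have "finite {k. \<epsilon> < norm (set_fourier S k)}"
    using assms(3) Ssub by (intro finite_set_fourier_gt)
  then obtain M where M: "\<And>l m. l \<in> int ` B1 \<Longrightarrow> m \<in> int ` B2 \<Longrightarrow>
      l - (M + m) \<notin> insert 0 {k. \<epsilon> < norm (set_fourier S k)}"
    using assms(5,6) by (metis obtain_shift_avoiding finite_imageI finite_insert)
  define A2 where "A2 = (+) M ` int ` B2"
  have "lower_riesz_bound S (int ` B1 \<union> A2) \<gamma>'"
  proof (rule lower_riesz_bound_Un[OF S _ _ _ assms(7)])
    show "lower_riesz_bound S A2 \<gamma>"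
      unfolding A2_def using assms(8) by (rule lower_riesz_bound_translate)
    show "norm (set_fourier S (l - m)) \<le> \<epsilon>" if "l \<in> int ` B1" "m \<in> A2" for l m
      using that M unfolding A2_def by (force simp: not_less)
    show "int ` B1 \<inter> A2 = {}"
      using M unfolding A2_def by force
    have "card (int ` B1) + card A2 = card B1 + card B2"
      unfolding A2_def image_image by (simp add: card_image inj_on_def)
    then show "\<epsilon> * (card (int ` B1) + card A2) \<le> 2 * pi * (\<gamma> - \<gamma>')"
      using assms(10) by (simp add: \<epsilon>_def field_simps)
  qed (use assms(5,6,9) \<open>\<epsilon> > 0\<close> in \<open>simp_all add: A2_def\<close>)
  moreover have "(\<lambda>b. M + int b) ` B2 = A2"
    unfolding A2_def by (simp add: image_image)
  ultimately show ?thesis by blast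
qed

end
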